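(* Let $k\ge 2$ and let $G$ and $H$ be $\Gamma_{\times k,t}$-external graphs with $\delta(G)\ge k$ and $\delta(H)\ge k$. Then \[ \Gamma_{\times k,t}(G\,\Box\,H)\ge\max\{\Gamma_{\times k,t}(G)\cdot|V(H)|,\ \Gamma_{\times k,t}(H)\cdot|V(G)|\}. \]
   Context: A set $S\subseteq V(G)$ is a $k$-tuple total dominating set ($k$TDS) of a graph $G$ with $\delta(G)\ge k$ if $|N_G(x)\cap S|\ge k$ for every $x\in V(G)$. The upper $k$-tuple total domination number $\Gamma_{\times k,t}(G)$ is the maximum cardinality of a minimal (with respect to inclusion) $k$TDS of $G$; a minimal $k$TDS of this cardinality is a $\Gamma_{\times k,t}$-set. For $v\in S$, a vertex $v'$ is a $k$-open private neighbor of $v$ with respect to $S$ if $v\in N_G(v')$ and $|N_G(v')\cap S|=k$; it is external if $v'\notin S$. A graph $G$ is $\Gamma_{\times k,t}$-external if it has a $\Gamma_{\times k,t}$-set $S$ such that every vertex of $S$ has an external $k$-open private neighbor with respect to $S$. The Cartesian product $G\,\Box\,H$ has vertex set $V(G)\times V(H)$, with $(g_1,h_1)\sim(g_2,h_2)$ iff either $g_1=g_2$ and $h_1h_2\in E(H)$, or $h_1=h_2$ and $g_1g_2\in E(G)$. *)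

theory Defs
  imports Main
begin

definition graph :: "'a set \<Rightarrow> ('a \<Rightarrow> 'a \<Rightarrow> bool) \<Rightarrow> bool" where
  "graph V E \<longleftrightarrow> finite V \<and> V \<noteq> {} \<and>
     (\<forall>x y. E x y \<longrightarrow> x \<in> V \<and> y \<in> V) \<and>
     (\<forall>x y. E x y \<longrightarrow> E y x) \<and> (\<forall>x. \<not> E x x)"

definition nbhd :: "'a set \<Rightarrow> ('a \<Rightarrow> 'a \<Rightarrow> bool) \<Rightarrow> 'a \<Rightarrow> 'a set" where
  "nbhd V E x = {y \<in> V. E x y}"

definition min_deg_ge :: "'a set \<Rightarrow> ('a \<Rightarrow> 'a \<Rightarrow> bool) \<Rightarrow> nat \<Rightarrow> bool" where
  "min_deg_ge V E k \<longleftrightarrow> (\<forall>x\<in>V. card (nbhd V E x) \<ge> k)"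

definition kTDS :: "'a set \<Rightarrow> ('a \<Rightarrow> 'a \<Rightarrow> bool) \<Rightarrow> nat \<Rightarrow> 'a set \<Rightarrow> bool" where
  "kTDS V E k S \<longleftrightarrow> S \<subseteq> V \<and> (\<forall>x\<in>V. card (nbhd V E x \<inter> S) \<ge> k)"

definition minimal_kTDS :: "'a set \<Rightarrow> ('a \<Rightarrow> 'a \<Rightarrow> bool) \<Rightarrow> nat \<Rightarrow> 'a set \<Rightarrow> bool" where
  "minimal_kTDS V E k S \<longleftrightarrow> kTDS V E k S \<and> (\<forall>T. T \<subset> S \<longrightarrow> \<not> kTDS V E k T)"

definition upper_ktdn :: "'a set \<Rightarrow> ('a \<Rightarrow> 'a \<Rightarrow> bool) \<Rightarrow> nat \<Rightarrow> nat" where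
  "upper_ktdn V E k = Max (card ` {S. minimal_kTDS V E k S})"

definition Gamma_set :: "'a set \<Rightarrow> ('a \<Rightarrow> 'a \<Rightarrow> bool) \<Rightarrow> nat \<Rightarrow> 'a set \<Rightarrow> bool" where
  "Gamma_set V E k S \<longleftrightarrow> minimal_kTDS V E k S \<and> card S = upper_ktdn V E k"

definition k_open_pn :: "'a set \<Rightarrow> ('a \<Rightarrow> 'a \<Rightarrow> bool) \<Rightarrow> nat \<Rightarrow> 'a set \<Rightarrow> 'a \<Rightarrow> 'a \<Rightarrow> bool" where
  "k_open_pn V E k S v v' \<longleftrightarrow> v' \<in> V \<and> v \<in> nbhd V E v' \<and> card (nbhd V E v' \<inter> S) = k"

definition Gamma_external :: "'a set \<Rightarrow> ('a \<Rightarrow> 'a \<Rightarrow> bool) \<Rightarrow> nat \<Rightarrow> bool" where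
  "Gamma_external V E k \<longleftrightarrow> (\<exists>S. Gamma_set V E k S \<and>
      (\<forall>v\<in>S. \<exists>v'. k_open_pn V E k S v v' \<and> v' \<notin> S))"

definition cart_edges :: "('a \<Rightarrow> 'a \<Rightarrow> bool) \<Rightarrow> ('b \<Rightarrow> 'b \<Rightarrow> bool) \<Rightarrow> 'a \<times> 'b \<Rightarrow> 'a \<times> 'b \<Rightarrow> bool" where
  "cart_edges EG EH p q \<longleftrightarrow>
     (fst p = fst q \<and> EH (snd p) (snd q)) \<or> (snd p = snd q \<and> EG (fst p) (fst q))"

end

theory Submission
  imports Defs
begin

text \<open>If every vertex of a minimal \<open>k\<close>TDS \<open>S\<close> of \<open>G\<close> has an external \<open>k\<close>-open private
neighbour \<open>v'\<close>, then the layer set \<open>S \<times> V(H)\<close> is a minimal \<open>k\<close>TDS of \<open>G \<box> H\<close>: a vertex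
\<open>(v', h)\<close> with \<open>v' \<notin> S\<close> sees \<open>S \<times> V(H)\<close> only inside its own \<open>G\<close>-layer, so it has exactly
\<open>k\<close> neighbours there and removing \<open>(v, h)\<close> destroys domination. Hence
\<open>\<Gamma>(G \<box> H) \<ge> \<Gamma>(G) \<cdot> |V(H)|\<close>; the other bound follows since \<open>G \<box> H \<cong> H \<box> G\<close>.\<close>

lemma kTDS_mono:
  assumes "finite V" "kTDS V E k T" "T \<subseteq> T'" "T' \<subseteq> V"
  shows "kTDS V E k T'"
  unfolding kTDS_def
proof (intro conjI ballI)
  fix x assume x: "x \<in> V"
  have "k \<le> card (nbhd V E x \<inter> T)" using assms(2) x by (simp add: kTDS_def)
  also have "\<dots> \<le> card (nbhd V E x \<inter> T')"
    by (rule card_mono) (use assms in \<open>auto simp: nbhd_def\<close>)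
  finally show "k \<le> card (nbhd V E x \<inter> T')" .
qed (use assms in auto)

lemma finite_minimal_kTDS:
  assumes "finite V"
  shows "finite {S. minimal_kTDS V E k S}"
  by (rule finite_subset[of _ "Pow V"]) (use assms in \<open>auto simp: minimal_kTDS_def kTDS_def\<close>)

lemma card_le_upper_ktdn:
  assumes "finite V" "minimal_kTDS V E k S"
  shows "card S \<le> upper_ktdn V E k"
  unfolding upper_ktdn_def using assms finite_minimal_kTDS[OF assms(1)] by (auto intro: Max_ge)

context
  fixes f :: "'a \<Rightarrow> 'b" and E :: "'a \<Rightarrow> 'a \<Rightarrow> bool" and E' :: "'b \<Rightarrow> 'b \<Rightarrow> bool"
  assumes bij_f: "bij f" and edges_f: "\<And>x y. E' (f x) (f y) \<longleftrightarrow> E x y"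
begin

lemma nbhd_bij_image: "nbhd (f ` V) E' (f x) = f ` nbhd V E x"
  unfolding nbhd_def using edges_f by auto

lemma kTDS_bij_image_iff: "kTDS (f ` V) E' k (f ` S) \<longleftrightarrow> kTDS V E k S"
proof -
  have inj_f: "inj f" using bij_f by (rule bij_is_inj)
  have "card (nbhd (f ` V) E' (f x) \<inter> f ` S) = card (nbhd V E x \<inter> S)" for x
    by (simp add: nbhd_bij_image image_Int[OF inj_f, symmetric] card_image inj_on_subset[OF inj_f])
  then show ?thesis
    unfolding kTDS_def by (simp add: inj_image_subset_iff[OF inj_f])
qed

lemma minimal_kTDS_bij_image_iff:
  "minimal_kTDS (f ` V) E' k (f ` S) \<longleftrightarrow> minimal_kTDS V E k S"
proof -
  have surj_f: "surj f" using bij_f by (rule bij_is_surj)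
  have image_psubset: "f ` T \<subset> f ` S \<longleftrightarrow> T \<subset> S" for T
    using bij_is_inj[OF bij_f] by (simp add: psubset_eq inj_image_subset_iff inj_image_eq_iff)
  have "(\<forall>T'. T' \<subset> f ` S \<longrightarrow> \<not> kTDS (f ` V) E' k T') \<longleftrightarrow>
        (\<forall>T. T \<subset> S \<longrightarrow> \<not> kTDS (f ` V) E' k (f ` T))"
  proof (intro iffI allI impI)
    fix T' assume minimal: "\<forall>T. T \<subset> S \<longrightarrow> \<not> kTDS (f ` V) E' k (f ` T)"
      and "T' \<subset> f ` S"
    then have "f -` T' \<subset> S" using image_psubset[of "f -` T'"] by (simp add: surj_f)
    with minimal have "\<not> kTDS (f ` V) E' k (f ` (f -` T'))" by blast
    then show "\<not> kTDS (f ` V) E' k T'" by (simp add: surj_f)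
  qed (simp add: image_psubset)
  then show ?thesis
    unfolding minimal_kTDS_def by (simp add: kTDS_bij_image_iff)
qed

lemma upper_ktdn_bij_image: "upper_ktdn (f ` V) E' k = upper_ktdn V E k"
proof -
  have surj_f: "surj f" using bij_f by (rule bij_is_surj)
  have "{S'. minimal_kTDS (f ` V) E' k S'} = (`) f ` {S. minimal_kTDS V E k S}"
  proof
    show "{S'. minimal_kTDS (f ` V) E' k S'} \<subseteq> (`) f ` {S. minimal_kTDS V E k S}"
    proof
      fix S' assume "S' \<in> {S'. minimal_kTDS (f ` V) E' k S'}"
      then have "f -` S' \<in> {S. minimal_kTDS V E k S}"
        by (simp add: minimal_kTDS_bij_image_iff[symmetric] surj_f)
      then show "S' \<in> (`) f ` {S. minimal_kTDS V E k S}"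
        by (metis image_eqI surj_image_vimage_eq[OF surj_f])
    qed
  qed (auto simp: minimal_kTDS_bij_image_iff)
  moreover have "card (f ` S) = card S" for S
    using bij_is_inj[OF bij_f] by (rule card_image[OF inj_on_subset]) simp
  ultimately show ?thesis
    unfolding upper_ktdn_def by (simp add: image_comp comp_def)
qed

end

lemma upper_ktdn_cart_commute:
  "upper_ktdn (VH \<times> VG) (cart_edges EH EG) k = upper_ktdn (VG \<times> VH) (cart_edges EG EH) k"
  using upper_ktdn_bij_image[where f = prod.swap and E = "cart_edges EG EH"
      and E' = "cart_edges EH EG" and V = "VG \<times> VH"]
  by (auto simp: cart_edges_def bij_swap product_swap)

lemma nbhd_cart_inter_layer:
  assumes "g \<in> VG" "h \<in> VH"
  shows "nbhd (VG \<times> VH) (cart_edges EG EH) (g, h) \<inter> (S \<times> VH)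
           = (nbhd VG EG g \<inter> S) \<times> {h} \<union> ({g} \<inter> S) \<times> nbhd VH EH h"
  using assms by (auto simp: nbhd_def cart_edges_def)

lemma kTDS_cart_layer:
  assumes "finite VG" "finite VH" "kTDS VG EG k S"
  shows "kTDS (VG \<times> VH) (cart_edges EG EH) k (S \<times> VH)"
  unfolding kTDS_def
proof (intro conjI ballI)
  show "S \<times> VH \<subseteq> VG \<times> VH" using assms(3) by (auto simp: kTDS_def)
  fix p assume "p \<in> VG \<times> VH"
  then obtain g h where p: "p = (g, h)" "g \<in> VG" "h \<in> VH" by blast
  have "k \<le> card (nbhd VG EG g \<inter> S)" using assms(3) p by (simp add: kTDS_def)
  also have "\<dots> = card ((nbhd VG EG g \<inter> S) \<times> {h})" by (simp add: card_cartesian_product)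
  also have "\<dots> \<le> card (nbhd (VG \<times> VH) (cart_edges EG EH) p \<inter> (S \<times> VH))"
    unfolding p(1) nbhd_cart_inter_layer[OF p(2,3)]
    by (rule card_mono) (use assms(1,2) in \<open>auto simp: nbhd_def\<close>)
  finally show "k \<le> card (nbhd (VG \<times> VH) (cart_edges EG EH) p \<inter> (S \<times> VH))" .
qed

lemma minimal_kTDS_cart_layer:
  assumes fin: "finite VG" "finite VH" and S: "kTDS VG EG k S"
    and pn: "\<forall>v\<in>S. \<exists>v'. k_open_pn VG EG k S v v' \<and> v' \<notin> S"
  shows "minimal_kTDS (VG \<times> VH) (cart_edges EG EH) k (S \<times> VH)"
  unfolding minimal_kTDS_def
proof (intro conjI allI impI notI kTDS_cart_layer[OF fin S])
  let ?V = "VG \<times> VH" and ?E = "cart_edges EG EH"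
  fix T assume "T \<subset> S \<times> VH" and T: "kTDS ?V ?E k T"
  then obtain v h where vh: "v \<in> S" "h \<in> VH" "(v, h) \<notin> T" by auto
  then obtain v' where "k_open_pn VG EG k S v v'" and v'_notin: "v' \<notin> S"
    using pn by blast
  then have v': "v' \<in> VG" "v \<in> nbhd VG EG v'" and card_v': "card (nbhd VG EG v' \<inter> S) = k"
    by (auto simp: k_open_pn_def)
  let ?N = "nbhd ?V ?E (v', h) \<inter> (S \<times> VH)"
  have "?N = (nbhd VG EG v' \<inter> S) \<times> {h}"
    using nbhd_cart_inter_layer[OF v'(1) vh(2)] v'_notin by simp
  then have card_N: "card ?N = k" and vh_in_N: "(v, h) \<in> ?N"
    using card_v' v'(2) vh(1) by (simp_all add: card_cartesian_product)
  have "finite ?N" using fin by (simp add: nbhd_def)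
  then have "k > 0" using card_N vh_in_N card_gt_0_iff by blast
  have "kTDS ?V ?E k (S \<times> VH - {(v, h)})"
    by (rule kTDS_mono[OF _ T]) (use fin \<open>T \<subset> S \<times> VH\<close> vh S in \<open>auto simp: kTDS_def\<close>)
  then have "k \<le> card (nbhd ?V ?E (v', h) \<inter> (S \<times> VH - {(v, h)}))"
    using v'(1) vh(2) by (simp add: kTDS_def)
  also have "\<dots> = card (?N - {(v, h)})" by (simp add: Int_Diff)
  also have "\<dots> = k - 1" using card_N vh_in_N by simp
  finally show False using \<open>k > 0\<close> by simp
qed

lemma upper_ktdn_cart_ge_left:
  assumes fin: "finite VG" "finite VH" and "Gamma_external VG EG k"
  shows "upper_ktdn VG EG k * card VH \<le> upper_ktdn (VG \<times> VH) (cart_edges EG EH) k"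
proof -
  obtain S where S: "Gamma_set VG EG k S"
    and pn: "\<forall>v\<in>S. \<exists>v'. k_open_pn VG EG k S v v' \<and> v' \<notin> S"
    using assms(3) unfolding Gamma_external_def by blast
  have "kTDS VG EG k S" using S by (simp add: Gamma_set_def minimal_kTDS_def)
  from minimal_kTDS_cart_layer[OF fin this pn]
  have "card (S \<times> VH) \<le> upper_ktdn (VG \<times> VH) (cart_edges EG EH) k"
    using fin by (intro card_le_upper_ktdn) simp_all
  moreover have "card S = upper_ktdn VG EG k" using S by (simp add: Gamma_set_def)
  ultimately show ?thesis by (simp add: card_cartesian_product)
qed

theorem mainTheorem10:
  fixes VG :: "'a set" and EG :: "'a \<Rightarrow> 'a \<Rightarrow> bool"
    and VH :: "'b set" and EH :: "'b \<Rightarrow> 'b \<Rightarrow> bool" and k :: nat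
  assumes "k \<ge> 2"
    and "graph VG EG" and "graph VH EH"
    and "min_deg_ge VG EG k" and "min_deg_ge VH EH k"
    and "Gamma_external VG EG k" and "Gamma_external VH EH k"
  shows "upper_ktdn (VG \<times> VH) (cart_edges EG EH) k \<ge>
           max (upper_ktdn VG EG k * card VH) (upper_ktdn VH EH k * card VG)"
proof (rule max.boundedI)
  have fin: "finite VG" "finite VH" using assms(2,3) by (auto simp: graph_def)
  show "upper_ktdn VG EG k * card VH \<le> upper_ktdn (VG \<times> VH) (cart_edges EG EH) k"
    by (rule upper_ktdn_cart_ge_left[OF fin assms(6)])
  show "upper_ktdn VH EH k * card VG \<le> upper_ktdn (VG \<times> VH) (cart_edges EG EH) k"
    using upper_ktdn_cart_ge_left[OF fin(2,1) assms(7), where EH = EG] upper_ktdn_cart_commute[of VH VG EH EG k]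
    by linarith
qed

end
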